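(* Let $\lambda>0$ and $g^*\ge 0$. For finite disjoint instance sets $I_L, I_R$ whose instances $i$ carry real gradients $g_i$, define the split gain $$G(I_L,I_R)=\frac{\left(\sum_{i\in I_L}g_i\right)^2}{|I_L|+\lambda}+\frac{\left(\sum_{i\in I_R}g_i\right)^2}{|I_R|+\lambda}.$$ Let $\Delta G$ be the sensitivity of $G$: the supremum of $|G(I_L,I_R)-G(I_L',I_R')|$ over all pairs of neighboring split configurations in which every gradient involved satisfies $|g_i|\le g^*$. Then $\Delta G\le 3{g^*}^2$.
   Context: Two split configurations $(I_L,I_R)$ and $(I_L',I_R')$ are neighboring if one is obtained from the other by adding a single instance $s$ (with gradient $g_s$) to one of the two children, i.e. $(I_L',I_R')=(I_L\cup\{s\},I_R)$ or $(I_L,I_R\cup\{s\})$, or vice versa. Here $g^*=\max_i |g_i|$ over the instances in the dataset. *)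

theory Defs
  imports Complex_Main
begin

definition split_gain :: "real \<Rightarrow> ('a \<Rightarrow> real) \<Rightarrow> 'a set \<Rightarrow> 'a set \<Rightarrow> real" where
  "split_gain lam g IL IR =
     (\<Sum>i\<in>IL. g i)^2 / (real (card IL) + lam) + (\<Sum>i\<in>IR. g i)^2 / (real (card IR) + lam)"

definition valid_split :: "'a set \<Rightarrow> 'a set \<Rightarrow> bool" where
  "valid_split IL IR \<longleftrightarrow> finite IL \<and> finite IR \<and> IL \<inter> IR = {}"

definition adds_one :: "'a set \<Rightarrow> 'a set \<Rightarrow> 'a set \<Rightarrow> 'a set \<Rightarrow> bool" where
  "adds_one IL IR IL' IR' \<longleftrightarrow>
     (\<exists>s. s \<notin> IL \<union> IR \<and> ((IL' = insert s IL \<and> IR' = IR) \<or> (IL' = IL \<and> IR' = insert s IR)))"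

definition neighboring :: "'a set \<Rightarrow> 'a set \<Rightarrow> 'a set \<Rightarrow> 'a set \<Rightarrow> bool" where
  "neighboring IL IR IL' IR' \<longleftrightarrow> adds_one IL IR IL' IR' \<or> adds_one IL' IR' IL IR"

definition gain_sensitivity :: "'a itself \<Rightarrow> real \<Rightarrow> real \<Rightarrow> real" where
  "gain_sensitivity (T::'a itself) lam gs = Sup {\<bar>split_gain lam g IL IR - split_gain lam g IL' IR'\<bar> | (g::'a \<Rightarrow> real) IL IR IL' IR'.
      valid_split IL IR \<and> valid_split IL' IR' \<and> neighboring IL IR IL' IR' \<and>
      (\<forall>i \<in> IL \<union> IR \<union> IL' \<union> IR'. \<bar>g i\<bar> \<le> gs)}"

end

theory Submission
  imports Defs
begin

text \<open>Adding an instance with gradient \<open>g\<close> to a child with gradient sum \<open>S\<close> changes its gain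
  \<open>S\<^sup>2 / a\<close> (where \<open>a = |I| + \<lambda>\<close>) by \<open>(2aSg + ag\<^sup>2 - S\<^sup>2) / (a(a + 1))\<close>. Since \<open>|S| \<le> a g*\<close>,
  completing the square gives the numerator the upper bound \<open>a(a + 1) g*\<^sup>2\<close>, and the crude estimate
  \<open>2a|S g| + S\<^sup>2 \<le> 3a\<^sup>2 g*\<^sup>2\<close> gives the lower bound. Removing an instance is the same change read
  backwards.\<close>

definition child_gain :: "real \<Rightarrow> ('a \<Rightarrow> real) \<Rightarrow> 'a set \<Rightarrow> real" where
  "child_gain lam g I = (\<Sum>i\<in>I. g i)^2 / (real (card I) + lam)"

lemma split_gain_eq_child_gain:
  "split_gain lam g IL IR = child_gain lam g IL + child_gain lam g IR"
  by (simp add: split_gain_def child_gain_def)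

lemma abs_square_div_increment_le:
  fixes a S g G :: real
  assumes a: "a > 0" and S: "\<bar>S\<bar> \<le> a * G" and g: "\<bar>g\<bar> \<le> G"
  shows "\<bar>(S + g)^2 / (a + 1) - S^2 / a\<bar> \<le> 3 * G^2"
proof -
  define N where "N = 2*a*S*g + a*g^2 - S^2"
  have diff: "(S + g)^2 / (a + 1) - S^2 / a = N / (a * (a + 1))"
    using a by (simp add: N_def field_simps power2_eq_square)
  have g2: "g^2 \<le> G^2" and S2: "S^2 \<le> (a*G)^2"
    using power_mono[OF g, of 2] power_mono[OF S, of 2] by simp_all
  have "N \<le> a * (a + 1) * g^2"
    using zero_le_power2[of "S - a*g"] by (simp add: N_def power2_eq_square algebra_simps)
  also have "\<dots> \<le> a * (a + 1) * (3 * G^2)"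
    using a g2 zero_le_power2[of G] by (intro mult_left_mono) (linarith, simp)
  finally have upper: "N \<le> a * (a + 1) * (3 * G^2)" .
  have "\<bar>S * g\<bar> \<le> a * G * G"
    unfolding abs_mult using S g a by (intro mult_mono) auto
  then have "- (a * G * G) \<le> S * g"
    by linarith
  then have "2 * a * (- (a * G * G)) \<le> 2 * a * (S * g)"
    using a by (intro mult_left_mono) auto
  moreover have "0 \<le> a * g^2"
    using a by simp
  ultimately have "- (a * a * (3 * G^2)) \<le> N"
    using S2 unfolding N_def by (simp add: power2_eq_square algebra_simps)
  moreover have "a * a * (3 * G^2) \<le> a * (a + 1) * (3 * G^2)"
    using a by (intro mult_right_mono) auto
  ultimately have lower: "- (a * (a + 1) * (3 * G^2)) \<le> N"
    by linarith
  have "\<bar>N\<bar> / (a * (a + 1)) \<le> 3 * G^2"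
    using upper lower a by (simp add: divide_le_eq abs_le_iff mult.commute)
  then show ?thesis
    using a by (simp add: diff)
qed

lemma child_gain_insert_bound:
  fixes g :: "'a \<Rightarrow> real"
  assumes lam: "lam > 0" and "finite I" and "s \<notin> I"
    and bounded: "\<forall>i\<in>insert s I. \<bar>g i\<bar> \<le> G"
  shows "\<bar>child_gain lam g (insert s I) - child_gain lam g I\<bar> \<le> 3 * G^2"
proof -
  have "G \<ge> 0"
    using bounded by (meson abs_ge_zero insertI1 order_trans)
  have "\<bar>\<Sum>i\<in>I. g i\<bar> \<le> (\<Sum>i\<in>I. \<bar>g i\<bar>)"
    by (rule sum_abs)
  also have "\<dots> \<le> real (card I) * G"
    using bounded sum_bounded_above[of I "\<lambda>i. \<bar>g i\<bar>" G] by auto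
  also have "\<dots> \<le> (real (card I) + lam) * G"
    using lam \<open>G \<ge> 0\<close> by (intro mult_right_mono) auto
  finally have "\<bar>((\<Sum>i\<in>I. g i) + g s)^2 / ((real (card I) + lam) + 1)
      - (\<Sum>i\<in>I. g i)^2 / (real (card I) + lam)\<bar> \<le> 3 * G^2"
    using lam bounded by (intro abs_square_div_increment_le) auto
  then show ?thesis
    using assms by (simp add: child_gain_def add_ac)
qed

lemma adds_one_split_gain_bound:
  fixes g :: "'a \<Rightarrow> real"
  assumes lam: "lam > 0" and "valid_split IL IR" and "adds_one IL IR IL' IR'"
    and bounded: "\<forall>i \<in> IL \<union> IR \<union> IL' \<union> IR'. \<bar>g i\<bar> \<le> G"
  shows "\<bar>split_gain lam g IL IR - split_gain lam g IL' IR'\<bar> \<le> 3 * G^2"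
proof -
  obtain s where s: "s \<notin> IL \<union> IR"
    and "(IL' = insert s IL \<and> IR' = IR) \<or> (IL' = IL \<and> IR' = insert s IR)"
    using \<open>adds_one IL IR IL' IR'\<close> unfolding adds_one_def by blast
  then consider "IL' = insert s IL" "IR' = IR" | "IL' = IL" "IR' = insert s IR"
    by blast
  then show ?thesis
  proof cases
    case 1
    then have "\<bar>child_gain lam g (insert s IL) - child_gain lam g IL\<bar> \<le> 3 * G^2"
      using assms s unfolding valid_split_def by (intro child_gain_insert_bound) auto
    with 1 show ?thesis
      by (simp add: split_gain_eq_child_gain abs_minus_commute)
  next
    case 2
    then have "\<bar>child_gain lam g (insert s IR) - child_gain lam g IR\<bar> \<le> 3 * G^2"
      using assms s unfolding valid_split_def by (intro child_gain_insert_bound) auto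
    with 2 show ?thesis
      by (simp add: split_gain_eq_child_gain abs_minus_commute)
  qed
qed

lemma neighboring_split_gain_bound:
  fixes g :: "'a \<Rightarrow> real"
  assumes "lam > 0" and "valid_split IL IR" and "valid_split IL' IR'"
    and "neighboring IL IR IL' IR'"
    and "\<forall>i \<in> IL \<union> IR \<union> IL' \<union> IR'. \<bar>g i\<bar> \<le> G"
  shows "\<bar>split_gain lam g IL IR - split_gain lam g IL' IR'\<bar> \<le> 3 * G^2"
  using assms adds_one_split_gain_bound[of lam IL' IR' IL IR g G]
    adds_one_split_gain_bound[of lam IL IR IL' IR' g G]
  unfolding neighboring_def by (auto simp: abs_minus_commute Un_ac)

theorem lemma1:
  fixes lam gs :: real
  assumes "lam > 0" and "gs \<ge> 0"
  shows "gain_sensitivity TYPE('a) lam gs \<le> 3 * gs^2"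
  unfolding gain_sensitivity_def
proof (rule cSup_least)
  fix s :: 'a
  have "valid_split {} {}" "valid_split {s} {}" "neighboring {} {} {s} {}"
    unfolding valid_split_def neighboring_def adds_one_def by auto
  then show "{\<bar>split_gain lam g IL IR - split_gain lam g IL' IR'\<bar> | (g::'a \<Rightarrow> real) IL IR IL' IR'.
      valid_split IL IR \<and> valid_split IL' IR' \<and> neighboring IL IR IL' IR' \<and>
      (\<forall>i \<in> IL \<union> IR \<union> IL' \<union> IR'. \<bar>g i\<bar> \<le> gs)} \<noteq> {}"
    using \<open>gs \<ge> 0\<close> by (fastforce intro!: exI[of _ "\<lambda>_. 0"])
qed (use assms neighboring_split_gain_bound in blast)

end
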